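(* Let $f$ be a $(b,1)$-coloring of the Hamming graph $H(n,q)$. Then $b$ is divisible by $q-1$. Moreover, if $q=p^s$ for a prime $p$ and $s\ge1$, then $b+1=q^r$ for some positive integer $r$.
   Context: The Hamming graph $H(n,q)$ has vertex set $\mathbb{Z}_q^n$, two vertices adjacent iff they differ in exactly one coordinate. A perfect $2$-coloring is a surjective map $f$ from the vertices onto $\{1,2\}$ such that each vertex of color $i$ has exactly $s_{i,j}$ neighbours of color $j$ (constants depending only on $i,j$). A $(b,c)$-coloring of $H(n,q)$ is a perfect $2$-coloring with quotient matrix $\begin{pmatrix} n(q-1)-b & b\\ c & n(q-1)-c\end{pmatrix}$, i.e. every vertex of color 1 has exactly $b$ neighbours of color 2 and every vertex of color 2 has exactly $c$ neighbours of color 1. *)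

theory Defs
  imports "HOL-Computational_Algebra.Primes"
begin

definition hamming_vertices :: "nat \<Rightarrow> nat \<Rightarrow> nat list set" where
  "hamming_vertices n q = {x. length x = n \<and> set x \<subseteq> {0..<q}}"

definition hamming_adj :: "nat list \<Rightarrow> nat list \<Rightarrow> bool" where
  "hamming_adj x y \<longleftrightarrow> length x = length y \<and> card {i. i < length x \<and> x ! i \<noteq> y ! i} = 1"

definition nbr_count :: "nat \<Rightarrow> nat \<Rightarrow> (nat list \<Rightarrow> nat) \<Rightarrow> nat list \<Rightarrow> nat \<Rightarrow> nat" where
  "nbr_count n q f x j = card {y \<in> hamming_vertices n q. hamming_adj x y \<and> f y = j}"

text \<open>A (b,c)-coloring: a perfect 2-coloring (surjective onto {1,2}) with quotient matrix
  [[n(q-1)-b, b],[c, n(q-1)-c]].  Since every vertex has degree n(q-1), the diagonal entries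
  are determined by the off-diagonal ones.\<close>
definition bc_coloring :: "nat \<Rightarrow> nat \<Rightarrow> (nat list \<Rightarrow> nat) \<Rightarrow> nat \<Rightarrow> nat \<Rightarrow> bool" where
  "bc_coloring n q f b c \<longleftrightarrow>
     f ` hamming_vertices n q = {1, 2} \<and>
     (\<forall>x \<in> hamming_vertices n q. f x = 1 \<longrightarrow> nbr_count n q f x 2 = b \<and> nbr_count n q f x 1 = n * (q - 1) - b) \<and>
     (\<forall>x \<in> hamming_vertices n q. f x = 2 \<longrightarrow> nbr_count n q f x 1 = c \<and> nbr_count n q f x 2 = n * (q - 1) - c)"

end

theory Submission
  imports Defs "HOL-Number_Theory.Number_Theory"
begin

text \<open>Let \<open>C\<close> and \<open>W\<close> be the colour classes. Counting the edges between them gives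
  \<open>|W| = b |C|\<close>, so \<open>q^n = (b + 1) |C|\<close> and \<open>b + 1\<close> divides \<open>q^n\<close>.
  Since every vertex of \<open>W\<close> has a single neighbour in \<open>C\<close>, for \<open>x \<in> C\<close> the neighbours of \<open>x\<close>
  obtained by changing one fixed coordinate (a clique of size \<open>q\<close> together with \<open>x\<close>) are
  either all of colour 2 or all of colour 1; hence \<open>b\<close> is a sum of multiples of \<open>q - 1\<close>.
  For \<open>q = p^s\<close>, \<open>b + 1\<close> is a power \<open>p^t\<close> congruent to 1 modulo \<open>q - 1\<close>; writing
  \<open>t = r s + v\<close> with \<open>v < s\<close> gives \<open>p^v \<equiv> 1\<close>, which forces \<open>v = 0\<close> as \<open>p^v < q\<close>.\<close>

lemma hamming_adj_sym: "hamming_adj x y \<Longrightarrow> hamming_adj y x"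
proof -
  assume adj: "hamming_adj x y"
  then have len: "length x = length y" unfolding hamming_adj_def by simp
  then have "{i. i < length y \<and> y ! i \<noteq> x ! i} = {i. i < length x \<and> x ! i \<noteq> y ! i}" by auto
  then show ?thesis using adj len unfolding hamming_adj_def by simp
qed

lemma hamming_adj_list_update:
  assumes "i < length x" "a \<noteq> x ! i"
  shows "hamming_adj x (x[i := a])"
proof -
  have "{j. j < length x \<and> x ! j \<noteq> x[i := a] ! j} = {i}"
    using assms by (auto simp: nth_list_update)
  then show ?thesis unfolding hamming_adj_def by simp
qed

lemma hamming_adj_imp_list_update:
  assumes "hamming_adj x y"
  obtains i where "i < length x" "x ! i \<noteq> y ! i" "y = x[i := y ! i]"
proof -
  have len: "length x = length y" using assms unfolding hamming_adj_def by simp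
  have "card {i. i < length x \<and> x ! i \<noteq> y ! i} = 1"
    using assms unfolding hamming_adj_def by (rule conjunct2)
  then obtain i where i: "{i. i < length x \<and> x ! i \<noteq> y ! i} = {i}"
    by (rule card_1_singletonE)
  have i_diff: "i < length x \<and> x ! i \<noteq> y ! i" using i by blast
  have same: "x ! j = y ! j" if "j < length x" "j \<noteq> i" for j
  proof (rule ccontr)
    assume "x ! j \<noteq> y ! j"
    then have "j \<in> {i. i < length x \<and> x ! i \<noteq> y ! i}" using that by simp
    then show False using i that by simp
  qed
  have "y = x[i := y ! i]"
  proof (rule nth_equalityI)
    show "length y = length (x[i := y ! i])" using len by simp
    fix j assume "j < length y"
    then show "y ! j = x[i := y ! i] ! j" using same[of j] len i_diff
      by (cases "j = i") (simp_all add: nth_list_update)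
  qed
  with i_diff show ?thesis by (intro that) auto
qed

lemma inj_on_list_update:
  assumes "I \<subseteq> {..<length x}" "\<And>i. i \<in> I \<Longrightarrow> x ! i \<notin> A i"
  shows "inj_on (\<lambda>(i, a). x[i := a]) (SIGMA i:I. A i)"
proof (rule inj_onI)
  fix u w assume u: "u \<in> (SIGMA i:I. A i)" and w: "w \<in> (SIGMA i:I. A i)"
    and eq: "(\<lambda>(i, a). x[i := a]) u = (\<lambda>(i, a). x[i := a]) w"
  obtain i a j a' where uw: "u = (i, a)" "w = (j, a')" by (cases u, cases w)
  have i: "i < length x" "a \<noteq> x ! i" using assms u uw by auto
  from eq uw have upd: "x[i := a] = x[j := a']" by simp
  have "i = j"
  proof (rule ccontr)
    assume "i \<noteq> j"
    then have "x[i := a] ! i = x ! i" using upd i(1) by simp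
    with i show False by simp
  qed
  with upd i(1) have "a = a'" by (metis nth_list_update_eq)
  with \<open>i = j\<close> uw show "u = w" by simp
qed

lemma finite_hamming_vertices: "finite (hamming_vertices n q)"
  and card_hamming_vertices: "card (hamming_vertices n q) = q ^ n"
proof -
  have V: "hamming_vertices n q = {xs. set xs \<subseteq> {0..<q} \<and> length xs = n}"
    unfolding hamming_vertices_def by auto
  show "finite (hamming_vertices n q)" unfolding V by (rule finite_lists_length_eq) simp
  show "card (hamming_vertices n q) = q ^ n" unfolding V by (subst card_lists_length_eq) simp_all
qed

lemma hamming_vertices_nth_less: "x \<in> hamming_vertices n q \<Longrightarrow> i < n \<Longrightarrow> x ! i < q"
  unfolding hamming_vertices_def by (auto dest: nth_mem)

lemma list_update_in_hamming_vertices: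
  "x \<in> hamming_vertices n q \<Longrightarrow> a < q \<Longrightarrow> x[i := a] \<in> hamming_vertices n q"
  using set_update_subset_insert[of x i a] unfolding hamming_vertices_def by auto

lemma card_hamming_neighbours:
  assumes x: "x \<in> hamming_vertices n q"
  shows "card {y \<in> hamming_vertices n q. hamming_adj x y \<and> P y}
           = (\<Sum>i<n. card {a. a < q \<and> a \<noteq> x ! i \<and> P (x[i := a])})"
proof -
  define S where "S i = {a. a < q \<and> a \<noteq> x ! i \<and> P (x[i := a])}" for i
  define upd where "upd = (\<lambda>(i, a). x[i := a])"
  have len: "length x = n" using x unfolding hamming_vertices_def by simp
  have "{y \<in> hamming_vertices n q. hamming_adj x y \<and> P y} = upd ` (SIGMA i:{..<n}. S i)"
  proof (intro equalityI subsetI)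
    fix y assume y: "y \<in> {y \<in> hamming_vertices n q. hamming_adj x y \<and> P y}"
    then have "hamming_adj x y" by simp
    then obtain i where i: "i < length x" "x ! i \<noteq> y ! i" "y = x[i := y ! i]"
      by (rule hamming_adj_imp_list_update)
    have "y ! i \<in> S i"
      using y i(1,2) i(3)[symmetric] hamming_vertices_nth_less[of y n q i] len
      unfolding S_def by auto
    moreover have "y = upd (i, y ! i)" unfolding upd_def using i(3) by simp
    ultimately show "y \<in> upd ` (SIGMA i:{..<n}. S i)"
      using i(1) len by (intro image_eqI) auto
  next
    fix y assume "y \<in> upd ` (SIGMA i:{..<n}. S i)"
    then obtain i a where "i < n" "a \<in> S i" "y = x[i := a]" unfolding upd_def by auto
    then show "y \<in> {y \<in> hamming_vertices n q. hamming_adj x y \<and> P y}"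
      using x len by (auto simp: S_def intro: list_update_in_hamming_vertices hamming_adj_list_update)
  qed
  moreover have "inj_on upd (SIGMA i:{..<n}. S i)"
    unfolding upd_def using len by (intro inj_on_list_update) (auto simp: S_def)
  ultimately show ?thesis
    using card_SigmaI[of "{..<n}" S] unfolding S_def by (simp add: card_image)
qed

lemma double_counting:
  assumes "finite A" "finite B"
    and "\<And>x. x \<in> A \<Longrightarrow> card {y \<in> B. R x y} = k"
    and "\<And>y. y \<in> B \<Longrightarrow> card {x \<in> A. R x y} = l"
  shows "l * card B = k * card A"
proof -
  have "l * card B = (\<Sum>y\<in>B. \<Sum>x\<in>{x \<in> A. R x y}. 1)" using assms(4) by simp
  also have "\<dots> = (\<Sum>x\<in>A. \<Sum>y\<in>{y \<in> B. R x y}. 1)"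
    by (rule sum.swap_restrict[symmetric, OF assms(1,2)])
  also have "\<dots> = k * card A" using assms(3) by simp
  finally show ?thesis .
qed

lemma bc_coloring_image: "bc_coloring n q f b c \<Longrightarrow> f ` hamming_vertices n q = {1, 2}"
  unfolding bc_coloring_def by blast

lemma bc_coloring_colour_cases:
  "bc_coloring n q f b c \<Longrightarrow> x \<in> hamming_vertices n q \<Longrightarrow> f x = 1 \<or> f x = 2"
  using bc_coloring_image by blast

lemma bc_coloring_nbr_count_1:
  "bc_coloring n q f b c \<Longrightarrow> x \<in> hamming_vertices n q \<Longrightarrow> f x = 1 \<Longrightarrow> nbr_count n q f x 2 = b"
  unfolding bc_coloring_def by blast

lemma bc_coloring_nbr_count_2:
  "bc_coloring n q f b c \<Longrightarrow> x \<in> hamming_vertices n q \<Longrightarrow> f x = 2 \<Longrightarrow> nbr_count n q f x 1 = c"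
  unfolding bc_coloring_def by blast

lemma bc_coloring_card_colour_class:
  assumes f: "bc_coloring n q f b c"
  shows "(b + c) * card {x \<in> hamming_vertices n q. f x = 1} = c * q ^ n"
proof -
  let ?V = "hamming_vertices n q"
  define C where "C = {x \<in> ?V. f x = 1}"
  define W where "W = {x \<in> ?V. f x = 2}"
  have fin: "finite C" "finite W" unfolding C_def W_def using finite_hamming_vertices by auto
  have "c * card W = b * card C"
  proof (rule double_counting[OF fin, where R = hamming_adj])
    fix x assume "x \<in> C"
    moreover have "{y \<in> W. hamming_adj x y} = {y \<in> ?V. hamming_adj x y \<and> f y = 2}"
      unfolding W_def by blast
    ultimately show "card {y \<in> W. hamming_adj x y} = b"
      using bc_coloring_nbr_count_1[OF f] unfolding nbr_count_def C_def by auto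
  next
    fix y assume "y \<in> W"
    moreover have "{x \<in> C. hamming_adj x y} = {x \<in> ?V. hamming_adj y x \<and> f x = 1}"
      unfolding C_def using hamming_adj_sym by blast
    ultimately show "card {x \<in> C. hamming_adj x y} = c"
      using bc_coloring_nbr_count_2[OF f] unfolding nbr_count_def W_def by auto
  qed
  moreover have "?V = C \<union> W" "C \<inter> W = {}"
    using bc_coloring_colour_cases[OF f] unfolding C_def W_def by auto
  then have "q ^ n = card C + card W"
    using card_Un_disjoint[OF fin] card_hamming_vertices by metis
  ultimately show ?thesis unfolding C_def[symmetric] by (simp add: algebra_simps)
qed

lemma bc_coloring_pos:
  assumes f: "bc_coloring n q f b c" and "c > 0"
  shows "b > 0"
proof (rule ccontr)
  assume "\<not> b > 0"
  then have "card {x \<in> hamming_vertices n q. f x = 1} = q ^ n"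
    using bc_coloring_card_colour_class[OF f] \<open>c > 0\<close> by simp
  then have "{x \<in> hamming_vertices n q. f x = 1} = hamming_vertices n q"
    using finite_hamming_vertices card_hamming_vertices
    by (metis (no_types, lifting) card_subset_eq mem_Collect_eq subsetI)
  moreover have "2 \<in> f ` hamming_vertices n q" using bc_coloring_image[OF f] by simp
  ultimately show False by force
qed

text \<open>The words \<open>x[i := a]\<close>, \<open>a < q\<close>, form a clique; a vertex of colour 2 in it has the two
  colour-1 neighbours \<open>x\<close> and \<open>x[i := a']\<close> unless \<open>x[i := a']\<close> has colour 2 as well.\<close>
lemma bc_coloring_1_coordinate_line:
  assumes f: "bc_coloring n q f b 1"
    and x: "x \<in> hamming_vertices n q" "f x = 1" and i: "i < n"
    and a: "a < q" "a \<noteq> x ! i" "f (x[i := a]) = 2"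
    and a': "a' < q" "a' \<noteq> x ! i"
  shows "f (x[i := a']) = 2"
proof (rule ccontr)
  let ?V = "hamming_vertices n q" and ?y = "x[i := a]" and ?z = "x[i := a']"
  assume "f ?z \<noteq> 2"
  then have fz: "f ?z = 1"
    using bc_coloring_colour_cases[OF f] list_update_in_hamming_vertices[OF x(1) a'(1)] by blast
  have len: "length x = n" using x unfolding hamming_vertices_def by simp
  have "a' \<noteq> a" using fz a by auto
  then have adj: "hamming_adj ?y x" "hamming_adj ?y ?z"
    using hamming_adj_list_update[of i ?y a'] hamming_adj_list_update[of i x a] i a len
    by (auto intro: hamming_adj_sym)
  have "?z \<noteq> x" using a' i len by (metis nth_list_update_eq)
  then have "2 = card {x, ?z}" by simp
  also have "\<dots> \<le> card {w \<in> ?V. hamming_adj ?y w \<and> f w = 1}"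
    using adj x fz list_update_in_hamming_vertices[OF x(1) a'(1)] finite_hamming_vertices
    by (intro card_mono) auto
  moreover have "nbr_count n q f ?y 1 = 1"
    using bc_coloring_nbr_count_2[OF f list_update_in_hamming_vertices[OF x(1) a(1)] a(3)] .
  ultimately show False unfolding nbr_count_def by simp
qed

lemma bc_coloring_1_dvd:
  assumes f: "bc_coloring n q f b 1"
  shows "(q - 1) dvd b"
proof -
  let ?V = "hamming_vertices n q"
  have "1 \<in> f ` ?V" using bc_coloring_image[OF f] by simp
  then obtain x where "x \<in> ?V" and "1 = f x" by (rule imageE)
  then have x: "x \<in> ?V" "f x = 1" by simp_all
  define S where "S i = {a. a < q \<and> a \<noteq> x ! i \<and> f (x[i := a]) = 2}" for i
  have S_cases: "S i = {} \<or> S i = {0..<q} - {x ! i}" if i: "i < n" for i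
  proof (cases "S i = {}")
    case False
    then obtain a where a: "a \<in> S i" by blast
    have "{0..<q} - {x ! i} \<subseteq> S i"
      using bc_coloring_1_coordinate_line[OF f x i, of a] a unfolding S_def by auto
    moreover have "S i \<subseteq> {0..<q} - {x ! i}" unfolding S_def by auto
    ultimately show ?thesis by blast
  qed simp
  have "card (S i) = 0 \<or> card (S i) = q - 1" if "i < n" for i
    using S_cases[OF that]
  proof
    assume "S i = {0..<q} - {x ! i}"
    then show ?thesis using hamming_vertices_nth_less[OF x(1) that] by simp
  qed simp
  then have "(q - 1) dvd card (S i)" if "i < n" for i
    using that by (metis dvd_0_right dvd_refl)
  then have "(q - 1) dvd (\<Sum>i<n. card (S i))" by (metis dvd_sum lessThan_iff)
  moreover have "b = (\<Sum>i<n. card (S i))"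
    using bc_coloring_nbr_count_1[OF f x] card_hamming_neighbours[OF x(1), of "\<lambda>y. f y = 2"]
    unfolding nbr_count_def S_def by simp
  ultimately show ?thesis by simp
qed

lemma prime_power_cong_one_imp_power:
  fixes p s m k :: nat
  assumes p: "prime p" and s: "s \<ge> 1"
    and m: "m dvd (p ^ s) ^ k" and cong: "[m = 1] (mod p ^ s - 1)"
  shows "\<exists>r. m = (p ^ s) ^ r"
proof -
  obtain t where t: "m = p ^ t"
    using m p divides_primepow_nat by (metis power_mult)
  define v where "v = t mod s"
  have tv: "p ^ t = p ^ v * (p ^ s) ^ (t div s)"
    unfolding v_def by (metis mult.commute power_add power_mult div_mult_mod_eq)
  have "[(p ^ s) ^ (t div s) = 1 ^ (t div s)] (mod p ^ s - 1)"
    using p prime_ge_1_nat by (intro cong_pow) (simp add: cong_altdef_nat)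
  then have "[p ^ v = m] (mod p ^ s - 1)"
    using t tv by (metis cong_scalar_left mult.right_neutral power_one cong_sym)
  then have pv: "[p ^ v = 1] (mod p ^ s - 1)" using cong by (rule cong_trans)
  have "v = 0"
  proof (rule ccontr)
    assume "v \<noteq> 0"
    have p2: "p \<ge> 2" using p by (simp add: prime_ge_2_nat)
    with \<open>v \<noteq> 0\<close> have "p ^ v \<ge> p" by (simp add: self_le_power)
    have "p ^ v < p ^ s" using p2 s unfolding v_def by (simp add: power_strict_increasing)
    have "(p ^ s - 1) dvd p ^ v - 1"
      using pv \<open>p ^ v \<ge> p\<close> p2 by (simp add: cong_altdef_nat)
    then have "p ^ s - 1 \<le> p ^ v - 1" using \<open>p ^ v \<ge> p\<close> p2 by (simp add: dvd_imp_le)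
    with \<open>p ^ v < p ^ s\<close> \<open>p ^ v \<ge> p\<close> p2 show False by linarith
  qed
  then show ?thesis using t tv by auto
qed

theorem proposition4:
  fixes n q b :: nat and f :: "nat list \<Rightarrow> nat"
  assumes "bc_coloring n q f b 1"
  shows "(q - 1) dvd b \<and>
         (\<forall>p s. prime p \<and> s \<ge> 1 \<and> q = p ^ s \<longrightarrow> (\<exists>r::nat. r > 0 \<and> b + 1 = q ^ r))"
proof (intro conjI allI impI)
  show dvd: "(q - 1) dvd b" using assms by (rule bc_coloring_1_dvd)
  fix p s assume ps: "prime p \<and> s \<ge> 1 \<and> q = p ^ s"
  have "b + 1 dvd q ^ n"
    using bc_coloring_card_colour_class[OF assms] by (metis dvd_triv_left mult_1)
  moreover have "[b + 1 = 1] (mod q - 1)" using dvd by (simp add: cong_altdef_nat)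
  ultimately obtain r where "b + 1 = q ^ r"
    using ps prime_power_cong_one_imp_power by blast
  moreover have "b > 0" using assms by (rule bc_coloring_pos) simp
  ultimately show "\<exists>r. r > 0 \<and> b + 1 = q ^ r" by (metis gr0I add_0 power_0 add_right_cancel)
qed

end
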